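(* Let $\alpha \ge 2$ be a constant and let $\gamma = 226\alpha$. Let $S$ be a set of $n$ distinct totally ordered elements. Let $A$ be a sequence of $m \ge \max\{64, \sqrt{n}\}$ elements chosen uniformly at random from $S$ without replacement (arranged in some order), and let $B$ be a set of at most $m$ elements chosen uniformly at random without replacement from $S \setminus A$. Let $d$ be an integer with $\max\{\mathrm{disl}(A), \log n\} \le d \le \frac{\sqrt{n}}{2160\alpha}$ and, for each $x \in B$, let $r_x \in \{1,\dots,m\}$ be an integer with $|r_x - \mathrm{rank}(x,A)| \le \alpha d$. Then the sequence $\widetilde{S}$ obtained by simultaneously inserting each element $x \in B$ into position $r_x$ of $A$ (breaking ties arbitrarily) has maximum dislocation at most $\gamma d$ with probability at least $1 - O(n^{-3})$.
   Context: For a set or sequence $T$ and an element $x$: $\mathrm{rank}(x,T) = 1 + |\{y\in T : y < x\}|$. For a sequence $T$ and $y \in T$, the dislocation of $y$ is $|\mathrm{pos}(y,T) - \mathrm{rank}(y,T)|$, where $\mathrm{pos}(y,T)$ is the position of $y$ in $T$; $\mathrm{disl}(T)$ is the maximum dislocation over elements of $T$. $\log$ is the binary logarithm. In the paper $\alpha$ is the constant from the noisy binary search theorem (depending only on the comparison error bound $p$). *)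

theory Defs
  imports "HOL-Probability.Probability"
begin

definition rank :: "'a::linorder \<Rightarrow> 'a set \<Rightarrow> nat" where
  "rank x T = 1 + card {y \<in> T. y < x}"

definition disl :: "'a::linorder list \<Rightarrow> nat" where
  "disl T = Max (insert 0 ((\<lambda>i. nat \<bar>int (i + 1) - int (rank (T ! i) (set T))\<bar>) ` {..<length T}))"

text \<open>T is a result of simultaneously inserting each x in B into position r x of the
  sequence As: the elements of As keep their order, and exactly r x - 1 elements of As
  precede x in T (i.e. x is placed immediately before the (r x)-th element of As);
  ties between elements of B with equal r are broken arbitrarily.\<close>
definition insertion_result :: "'a list \<Rightarrow> 'a set \<Rightarrow> ('a \<Rightarrow> nat) \<Rightarrow> 'a list \<Rightarrow> bool" where
  "insertion_result As B r T \<longleftrightarrow>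
     distinct T \<and> set T = set As \<union> B \<and>
     filter (\<lambda>y. y \<in> set As) T = As \<and>
     (\<forall>x\<in>B. length (filter (\<lambda>y. y \<in> set As) (takeWhile (\<lambda>y. y \<noteq> x) T)) = r x - 1)"

definition sample_AB :: "'a set \<Rightarrow> nat \<Rightarrow> nat \<Rightarrow> ('a set \<times> 'a set) pmf" where
  "sample_AB S m k =
     do { A \<leftarrow> pmf_of_set {A. A \<subseteq> S \<and> card A = m};
          B \<leftarrow> pmf_of_set {B. B \<subseteq> S - A \<and> card B = k};
          return_pmf (A, B) }"

end

theory Submission
  imports Defs
begin

text \<open>
  Put \<open>U = A \<union> B\<close>, \<open>s = \<lfloor>112\<alpha>d\<rfloor>\<close> and \<open>L = \<lceil>2\<alpha>d\<rceil>\<close>. Suppose every window of \<open>s\<close>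
  consecutive elements of \<open>U\<close> contains more than \<open>L\<close> elements of \<open>A\<close>. Then every interval
  containing at most \<open>L\<close> elements of \<open>A\<close> contains fewer than \<open>s\<close> elements of \<open>B\<close>. When the
  insertion ranks are off by at most \<open>\<alpha>d\<close>, the elements of \<open>B\<close> that end up on the wrong
  side of an element \<open>z\<close> all lie in such an interval next to \<open>z\<close>, so the position and the
  rank of \<open>z\<close> differ by at most \<open>\<alpha>d + 2s \<le> 225\<alpha>d\<close>.

  Given \<open>U\<close>, the set \<open>A\<close> is a uniform \<open>m\<close>-subset of \<open>U\<close>, and \<open>|U| \<le> 2m\<close>. Hence a fixed
  window contains at most \<open>L\<close> elements of \<open>A\<close> with probability at most
  \<open>C(s,L) 2\<^sup>L\<^sup>-\<^sup>s \<le> n\<^sup>-\<^sup>5\<close>. A union bound over the at most \<open>n\<close> windows and the at most \<open>n\<close>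
  values \<open>d \<ge> log n\<close> gives \<open>n\<^sup>-\<^sup>3\<close>.
\<close>

section \<open>Dislocation of an approximate insertion\<close>

lemma takeWhile_neq_nth:
  assumes "distinct xs" "i < length xs"
  shows "takeWhile (\<lambda>y. y \<noteq> xs ! i) xs = take i xs"
  using assms
proof (induction xs arbitrary: i)
  case Nil
  then show ?case by simp
next
  case (Cons x xs)
  show ?case
  proof (cases i)
    case 0
    then show ?thesis by simp
  next
    case (Suc j)
    with Cons.prems have "x \<noteq> xs ! j" by auto
    with Suc Cons show ?thesis by simp
  qed
qed

lemma length_filter_take_mono:
  "i \<le> j \<Longrightarrow> length (filter P (take i xs)) \<le> length (filter P (take j xs))"
  by (metis le_add_diff_inverse take_add filter_append length_append le_add1)

lemma disl_ge_nth:
  assumes "i < length T"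
  shows "\<bar>real (Suc i) - real (rank (T ! i) (set T))\<bar> \<le> real (disl T)"
proof -
  have "nat \<bar>int (i + 1) - int (rank (T ! i) (set T))\<bar> \<le> disl T"
    unfolding disl_def using assms by (intro Max_ge) auto
  then show ?thesis by linarith
qed

lemma disl_le:
  assumes "0 \<le> e"
    and "\<And>i. i < length T \<Longrightarrow> \<bar>real (Suc i) - real (rank (T ! i) (set T))\<bar> \<le> e"
  shows "real (disl T) \<le> e"
proof -
  have "disl T \<in> insert 0 ((\<lambda>i. nat \<bar>int (i + 1) - int (rank (T ! i) (set T))\<bar>) ` {..<length T})"
    unfolding disl_def by (intro Max_in) auto
  then show ?thesis
    using assms by auto
qed

lemma rank_Un_disjoint:
  assumes "finite A" "finite B" "A \<inter> B = {}"
  shows "rank z (A \<union> B) = rank z A + card {y\<in>B. y < z}"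
proof -
  have "{y\<in>A \<union> B. y < z} = {y\<in>A. y < z} \<union> {y\<in>B. y < z}" by auto
  then show ?thesis
    unfolding rank_def using assms by (simp add: card_Un_disjoint disjoint_iff)
qed

lemma card_interval_add_rank:
  fixes y z :: "'a::linorder"
  assumes "finite A" "y \<le> z"
  shows "card {a\<in>A. y \<le> a \<and> a \<le> z} + rank y A = rank z A + of_bool (z \<in> A)"
proof -
  have "{a\<in>A. a \<le> z} = {a\<in>A. y \<le> a \<and> a \<le> z} \<union> {a\<in>A. a < y}"
    using assms(2) by auto
  then have "card {a\<in>A. a \<le> z} = card {a\<in>A. y \<le> a \<and> a \<le> z} + card {a\<in>A. a < y}"
    using assms(1) by (simp only:) (rule card_Un_disjoint; auto)
  moreover have "{a\<in>A. a \<le> z} = {a\<in>A. a < z} \<union> (if z \<in> A then {z} else {})"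
    by (auto simp: le_less)
  then have "card {a\<in>A. a \<le> z} = card {a\<in>A. a < z} + of_bool (z \<in> A)"
    using assms(1) by simp
  ultimately show ?thesis unfolding rank_def by simp
qed

definition sparse_wrt :: "'a::linorder set \<Rightarrow> nat \<Rightarrow> 'a set \<Rightarrow> nat \<Rightarrow> bool" where
  "sparse_wrt A L B s \<longleftrightarrow>
     (\<forall>u v. card {a\<in>A. u \<le> a \<and> a \<le> v} \<le> L \<longrightarrow> card {b\<in>B. u \<le> b \<and> b \<le> v} < s)"

lemma sparse_wrt_card_above:
  assumes "sparse_wrt A L B s" "0 < s" "finite B" "Z \<subseteq> B"
    and "\<And>y. y \<in> Z \<Longrightarrow> u \<le> y \<and> card {a\<in>A. u \<le> a \<and> a \<le> y} \<le> L"
  shows "card Z < s"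
proof (cases "Z = {}")
  case False
  have "finite Z" using assms(3,4) finite_subset by blast
  with False have "Max Z \<in> Z" "\<forall>y\<in>Z. y \<le> Max Z" by auto
  then have "card Z \<le> card {b\<in>B. u \<le> b \<and> b \<le> Max Z}"
    using assms(3-5) by (intro card_mono) auto
  also have "\<dots> < s"
    using assms(1,5) \<open>Max Z \<in> Z\<close> unfolding sparse_wrt_def by blast
  finally show ?thesis .
qed (use assms(2) in simp)

lemma sparse_wrt_card_below:
  assumes "sparse_wrt A L B s" "0 < s" "finite B" "Z \<subseteq> B"
    and "\<And>y. y \<in> Z \<Longrightarrow> y \<le> v \<and> card {a\<in>A. y \<le> a \<and> a \<le> v} \<le> L"
  shows "card Z < s"
proof (cases "Z = {}")
  case False
  have "finite Z" using assms(3,4) finite_subset by blast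
  with False have "Min Z \<in> Z" "\<forall>y\<in>Z. Min Z \<le> y" by auto
  then have "card Z \<le> card {b\<in>B. Min Z \<le> b \<and> b \<le> v}"
    using assms(3-5) by (intro card_mono) auto
  also have "\<dots> < s"
    using assms(1,5) \<open>Min Z \<in> Z\<close> unfolding sparse_wrt_def by blast
  finally show ?thesis .
qed (use assms(2) in simp)

lemma nth_length_prefix: "xs = ys @ x # zs \<Longrightarrow> length ys < length xs \<and> xs ! length ys = x"
  by simp

definition count_before :: "'a set \<Rightarrow> 'a list \<Rightarrow> nat \<Rightarrow> nat" where
  "count_before A T i = length (filter (\<lambda>y. y \<in> A) (take i T))"

lemma count_before_mono: "i \<le> j \<Longrightarrow> count_before A T i \<le> count_before A T j"
  unfolding count_before_def by (rule length_filter_take_mono)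

lemma count_before_Suc:
  "i < length T \<Longrightarrow> count_before A T (Suc i) = count_before A T i + of_bool (T ! i \<in> A)"
  unfolding count_before_def by (simp add: take_Suc_conv_app_nth)

lemma insertion_result_distinct: "insertion_result As B r T \<Longrightarrow> distinct T"
  and set_insertion_result: "insertion_result As B r T \<Longrightarrow> set T = set As \<union> B"
  unfolding insertion_result_def by auto

locale approximate_insertion =
  fixes As :: "'a::linorder list" and B :: "'a set" and r :: "'a \<Rightarrow> nat" and T :: "'a list"
    and e :: real
  assumes ins: "insertion_result As B r T" and disj: "B \<inter> set As = {}"
    and disl_As: "real (disl As) \<le> e"
    and r_close: "\<And>x. x \<in> B \<Longrightarrow> 1 \<le> r x \<and> \<bar>real (r x) - real (rank x (set As))\<bar> \<le> e"
begin

lemma finite_B: "finite B"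
  using set_insertion_result[OF ins] by (metis finite_Un finite_set)

lemma r_eq_count_before:
  assumes "j < length T" "T ! j \<in> B"
  shows "real (r (T ! j)) = real (count_before (set As) T j) + 1"
proof -
  have "count_before (set As) T j = r (T ! j) - 1"
    using ins assms takeWhile_neq_nth[OF insertion_result_distinct[OF ins] assms(1)]
    unfolding insertion_result_def count_before_def by auto
  with r_close[OF assms(2)] show ?thesis by simp
qed

lemma nth_As_count_before:
  assumes "i < length T" "T ! i \<in> set As"
  shows "count_before (set As) T i < length As \<and> As ! count_before (set As) T i = T ! i"
proof -
  let ?P = "\<lambda>y. y \<in> set As"
  have "As = filter ?P (take i T) @ filter ?P (drop i T)"
    using ins unfolding insertion_result_def by (metis append_take_drop_id filter_append)
  also have "drop i T = T ! i # drop (Suc i) T"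
    using assms(1) by (rule Cons_nth_drop_Suc[symmetric])
  also have "filter ?P (T ! i # drop (Suc i) T) = T ! i # filter ?P (drop (Suc i) T)"
    using assms(2) by simp
  finally show ?thesis
    unfolding count_before_def by (rule nth_length_prefix)
qed

lemma count_before_close_rank:
  assumes "i < length T"
  shows "\<bar>real (count_before (set As) T i) + 1 - real (rank (T ! i) (set As))\<bar> \<le> e"
proof (cases "T ! i \<in> B")
  case True
  then show ?thesis using r_close r_eq_count_before[OF assms] by force
next
  case False
  then have A: "T ! i \<in> set As" using set_insertion_result[OF ins] nth_mem[OF assms] by blast
  with assms have "count_before (set As) T i < length As"
    and "As ! count_before (set As) T i = T ! i"
    using nth_As_count_before by simp_all
  with disl_ge_nth[of "count_before (set As) T i" As] disl_As show ?thesis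
    by (simp add: add.commute)
qed

lemma rank_earlier_B_le:
  assumes "j < i" "i < length T" "T ! j \<in> B"
  shows "real (rank (T ! j) (set As)) \<le> real (rank (T ! i) (set As)) + 2 * e"
proof -
  have "count_before (set As) T j \<le> count_before (set As) T i"
    using assms(1) by (intro count_before_mono) simp
  moreover have "real (r (T ! j)) = real (count_before (set As) T j) + 1"
    using assms by (intro r_eq_count_before) auto
  ultimately show ?thesis
    using r_close[OF assms(3)] count_before_close_rank[OF assms(2)] by linarith
qed

lemma rank_later_B_ge:
  assumes "i < j" "j < length T" "T ! j \<in> B"
  shows "real (rank (T ! i) (set As)) + of_bool (T ! i \<in> set As) - 2 * e
           \<le> real (rank (T ! j) (set As))"
proof -
  have "count_before (set As) T i + of_bool (T ! i \<in> set As) \<le> count_before (set As) T j"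
    using count_before_Suc[of i T "set As"] count_before_mono[of "Suc i" j "set As" T] assms
    by linarith
  then have "real (count_before (set As) T i) + of_bool (T ! i \<in> set As)
      \<le> real (count_before (set As) T j)"
    by (metis of_nat_add of_nat_le_iff of_nat_of_bool)
  then show ?thesis
    using r_close[OF assms(3)] r_eq_count_before[OF assms(2,3)]
      count_before_close_rank[OF order.strict_trans[OF assms(1,2)]] by linarith
qed

lemma index_eq_count_before_add_card:
  assumes "i \<le> length T"
  shows "i = count_before (set As) T i + card (set (take i T) \<inter> B)"
proof -
  let ?P = "\<lambda>y. y \<in> set As"
  have "i = length (filter ?P (take i T)) + length (filter (\<lambda>y. \<not> ?P y) (take i T))"
    using assms sum_length_filter_compl[of ?P "take i T"] by simp
  moreover have "set (filter (\<lambda>y. \<not> ?P y) (take i T)) = set (take i T) \<inter> B"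
    using set_insertion_result[OF ins] disj set_take_subset[of i T] by auto
  moreover have "distinct (filter (\<lambda>y. \<not> ?P y) (take i T))"
    using insertion_result_distinct[OF ins] by simp
  ultimately show ?thesis unfolding count_before_def by (metis distinct_card)
qed

context
  fixes L s :: nat
  assumes sparse: "sparse_wrt (set As) L B s" and L: "2 * e \<le> real L" and s: "0 < s"
begin

lemma card_larger_B_before_lt:
  assumes i: "i < length T"
  shows "card (set (take i T) \<inter> B - {y\<in>B. y < T ! i}) < s"
proof (rule sparse_wrt_card_above[where u = "T ! i", OF sparse s finite_B])
  fix y assume y: "y \<in> set (take i T) \<inter> B - {y\<in>B. y < T ! i}"
  then obtain j where "j < length (take i T)" "take i T ! j = y"
    by (metis DiffD1 IntD1 in_set_conv_nth)
  with y have j: "j < i" "T ! j = y" "y \<in> B" "T ! i \<le> y"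
    by auto
  then have "card {a\<in>set As. T ! i \<le> a \<and> a \<le> y} + rank (T ! i) (set As) = rank y (set As)"
    using disj card_interval_add_rank[OF finite_set \<open>T ! i \<le> y\<close>] by auto
  moreover have "real (rank y (set As)) \<le> real (rank (T ! i) (set As)) + 2 * e"
    using rank_earlier_B_le[OF j(1) i] j by simp
  ultimately have "real (card {a\<in>set As. T ! i \<le> a \<and> a \<le> y}) \<le> real L"
    using L by linarith
  with j show "T ! i \<le> y \<and> card {a\<in>set As. T ! i \<le> a \<and> a \<le> y} \<le> L" by simp
qed auto

lemma card_smaller_B_after_lt:
  assumes i: "i < length T"
  shows "card ({y\<in>B. y < T ! i} - set (take i T) \<inter> B) < s"
proof (rule sparse_wrt_card_below[where v = "T ! i", OF sparse s finite_B])
  fix y assume y: "y \<in> {y\<in>B. y < T ! i} - set (take i T) \<inter> B"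
  then have "y \<in> set T" using set_insertion_result[OF ins] by auto
  then obtain j where j: "j < length T" "T ! j = y"
    by (metis in_set_conv_nth)
  have "j \<noteq> i" using y j(2) by auto
  moreover have "\<not> j < i"
  proof
    assume "j < i"
    then have "y \<in> set (take i T)"
      using j by (metis in_set_conv_nth length_take min_less_iff_conj nth_take)
    with y show False by blast
  qed
  ultimately have "i < j" by simp
  from y have "y \<in> B" "y \<le> T ! i" by auto
  then have "card {a\<in>set As. y \<le> a \<and> a \<le> T ! i} + rank y (set As)
      = rank (T ! i) (set As) + of_bool (T ! i \<in> set As)"
    using card_interval_add_rank[OF finite_set \<open>y \<le> T ! i\<close>] by blast
  then have "real (card {a\<in>set As. y \<le> a \<and> a \<le> T ! i}) + real (rank y (set As))
      = real (rank (T ! i) (set As)) + of_bool (T ! i \<in> set As)"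
    by (metis of_nat_add of_nat_of_bool)
  moreover have "real (rank (T ! i) (set As)) + of_bool (T ! i \<in> set As) - 2 * e
      \<le> real (rank y (set As))"
    using rank_later_B_ge[OF \<open>i < j\<close> j(1)] j \<open>y \<in> B\<close> by simp
  ultimately have "real (card {a\<in>set As. y \<le> a \<and> a \<le> T ! i}) \<le> real L"
    using L by linarith
  with \<open>y \<le> T ! i\<close> show "y \<le> T ! i \<and> card {a\<in>set As. y \<le> a \<and> a \<le> T ! i} \<le> L"
    by simp
qed auto

lemma disl_le_if_sparse_wrt: "real (disl T) \<le> e + 2 * real s"
proof (rule disl_le)
  show "0 \<le> e + 2 * real s" using disl_As of_nat_0_le_iff[of "disl As"] by linarith
next
  fix i assume i: "i < length T"
  define X where "X = set (take i T) \<inter> B"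
  define Y where "Y = {y\<in>B. y < T ! i}"
  have fin: "finite X" "finite Y"
    using finite_B by (simp_all add: X_def Y_def)
  have "card (X - Y) < s" "card (Y - X) < s"
    unfolding X_def Y_def by (rule card_larger_B_before_lt[OF i] card_smaller_B_after_lt[OF i])+
  moreover have "real (card X) - real (card Y) = real (card (X - Y)) - real (card (Y - X))"
    using card_Int_Diff[OF fin(1), of Y] card_Int_Diff[OF fin(2), of X] by (simp add: Int_commute)
  moreover have "real i = real (count_before (set As) T i) + real (card X)"
    using arg_cong[where f = real, OF index_eq_count_before_add_card[of i]] i
    unfolding X_def by simp
  moreover have "real (rank (T ! i) (set T)) = real (rank (T ! i) (set As)) + real (card Y)"
    unfolding Y_def set_insertion_result[OF ins] using finite_B disj
    by (subst rank_Un_disjoint) auto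
  ultimately show "\<bar>real (Suc i) - real (rank (T ! i) (set T))\<bar> \<le> e + 2 * real s"
    using count_before_close_rank[OF i] by linarith
qed

end

end

section \<open>Dense windows\<close>

definition window :: "'a::linorder set \<Rightarrow> nat \<Rightarrow> nat \<Rightarrow> 'a set" where
  "window U s i = (\<lambda>p. sorted_list_of_set U ! p) ` {i..<i + s}"

definition dense_windows :: "'a::linorder set \<Rightarrow> 'a set \<Rightarrow> nat \<Rightarrow> nat \<Rightarrow> bool" where
  "dense_windows U A s L \<longleftrightarrow> (\<forall>i. i + s \<le> card U \<longrightarrow> L < card (A \<inter> window U s i))"

lemma window_subset_card:
  assumes "finite U" "i + s \<le> card U"
  shows "window U s i \<subseteq> U" "card (window U s i) = s"
proof -
  let ?us = "sorted_list_of_set U"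
  have "inj_on (\<lambda>p. ?us ! p) {i..<i + s}"
    using assms by (auto simp: inj_on_def nth_eq_iff_index_eq)
  then show "card (window U s i) = s"
    unfolding window_def by (simp add: card_image)
  have "?us ! p \<in> U" if "p < card U" for p
    using that assms(1) by (metis length_sorted_list_of_set nth_mem set_sorted_list_of_set)
  with assms(2) show "window U s i \<subseteq> U"
    unfolding window_def by auto
qed

lemma interval_contains_window:
  fixes u v :: "'a::linorder"
  assumes "finite U" "0 < s" "s \<le> card {x\<in>U. u \<le> x \<and> x \<le> v}"
  shows "\<exists>i. i + s \<le> card U \<and> window U s i \<subseteq> {x. u \<le> x \<and> x \<le> v}"
proof -
  let ?us = "sorted_list_of_set U"
  define P where "P = {p. p < card U \<and> u \<le> ?us ! p \<and> ?us ! p \<le> v}"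
  have "{x\<in>U. u \<le> x \<and> x \<le> v} \<subseteq> (\<lambda>p. ?us ! p) ` P"
  proof
    fix x assume x: "x \<in> {x\<in>U. u \<le> x \<and> x \<le> v}"
    then obtain p where "p < card U" "?us ! p = x"
      using assms(1) by (metis (no_types, lifting) in_set_conv_nth length_sorted_list_of_set
          mem_Collect_eq set_sorted_list_of_set)
    with x show "x \<in> (\<lambda>p. ?us ! p) ` P"
      by (auto simp: P_def)
  qed
  then have "card {x\<in>U. u \<le> x \<and> x \<le> v} \<le> card ((\<lambda>p. ?us ! p) ` P)"
    by (intro card_mono) (simp_all add: P_def)
  also have "\<dots> \<le> card P"
    by (rule card_image_le) (simp add: P_def)
  finally have "s \<le> card P" using assms(3) by linarith
  moreover have "finite P" by (simp add: P_def)
  ultimately have "P \<noteq> {}" using assms(2) by auto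
  define i where "i = Min P"
  define j where "j = Max P"
  have "i \<in> P" "j \<in> P"
    using \<open>P \<noteq> {}\<close> \<open>finite P\<close> by (simp_all add: i_def j_def)
  have "j < card U" using \<open>j \<in> P\<close> by (simp add: P_def)
  have "{i..j} \<subseteq> P"
  proof
    fix q assume q: "q \<in> {i..j}"
    with \<open>j < card U\<close> have "q < card U" by simp
    moreover have "?us ! i \<le> ?us ! q" "?us ! q \<le> ?us ! j"
      using q \<open>q < card U\<close> \<open>j < card U\<close>
      by (auto intro!: sorted_nth_mono[OF sorted_sorted_list_of_set])
    ultimately show "q \<in> P"
      using \<open>i \<in> P\<close> \<open>j \<in> P\<close> unfolding P_def by fastforce
  qed
  moreover have "P \<subseteq> {i..j}"
    using \<open>finite P\<close> by (auto simp: i_def j_def)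
  ultimately have "P = {i..j}" by blast
  with \<open>s \<le> card P\<close> have "{i..<i + s} \<subseteq> P" by auto
  moreover have "i + s \<le> card U"
    using \<open>s \<le> card P\<close> \<open>P = {i..j}\<close> \<open>j < card U\<close> assms(2) by (simp; arith)
  ultimately show ?thesis
    unfolding window_def P_def by blast
qed

lemma dense_windows_imp_sparse_wrt:
  assumes "finite U" "A \<subseteq> U" "B \<subseteq> U" "0 < s" "dense_windows U A s L"
  shows "sparse_wrt A L B s"
  unfolding sparse_wrt_def
proof (intro allI impI)
  fix u v assume A_few: "card {a\<in>A. u \<le> a \<and> a \<le> v} \<le> L"
  show "card {b\<in>B. u \<le> b \<and> b \<le> v} < s"
  proof (rule ccontr)
    assume "\<not> ?thesis"
    moreover have "card {b\<in>B. u \<le> b \<and> b \<le> v} \<le> card {x\<in>U. u \<le> x \<and> x \<le> v}"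
      using assms(1,3) by (intro card_mono) auto
    ultimately have "s \<le> card {x\<in>U. u \<le> x \<and> x \<le> v}" by linarith
    then obtain i where i: "i + s \<le> card U" "window U s i \<subseteq> {x. u \<le> x \<and> x \<le> v}"
      using interval_contains_window[OF assms(1,4)] by blast
    then have "card (A \<inter> window U s i) \<le> card {a\<in>A. u \<le> a \<and> a \<le> v}"
      using assms(1,2) finite_subset by (intro card_mono) fastforce+
    with A_few i(1) assms(5) show False
      unfolding dense_windows_def by fastforce
  qed
qed

lemma exists_subset_Diff_card:
  assumes "finite W" "card (A \<inter> W) \<le> L"
  shows "\<exists>Q\<subseteq>W - A. card Q = card W - L"
proof -
  have "card (W - A) = card W - card (W \<inter> A)"
    using assms(1) by (simp add: card_Diff_subset_Int)
  then have "card W - L \<le> card (W - A)"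
    using assms(2) by (simp add: Int_commute)
  then show ?thesis by (rule obtain_subset_with_card_n) blast
qed

lemma card_subsets_sparse_in_some:
  fixes U :: "'a set" and W :: "'i \<Rightarrow> 'a set"
  assumes "finite U" "finite I" "\<And>i. i \<in> I \<Longrightarrow> W i \<subseteq> U \<and> card (W i) = s" "L \<le> s"
  shows "card {A. A \<subseteq> U \<and> card A = m \<and> (\<exists>i\<in>I. card (A \<inter> W i) \<le> L)}
           \<le> card I * (s choose L) * ((card U - (s - L)) choose m)"
proof -
  define F where "F i = {Q. Q \<subseteq> W i \<and> card Q = s - L}" for i
  have fin_W: "finite (W i)" if "i \<in> I" for i
    using assms(1) assms(3)[OF that] finite_subset by blast
  have "{A. A \<subseteq> U \<and> card A = m \<and> (\<exists>i\<in>I. card (A \<inter> W i) \<le> L)}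
      \<subseteq> (\<Union>i\<in>I. \<Union>Q\<in>F i. {A. A \<subseteq> U - Q \<and> card A = m})"
  proof
    fix A assume "A \<in> {A. A \<subseteq> U \<and> card A = m \<and> (\<exists>i\<in>I. card (A \<inter> W i) \<le> L)}"
    then obtain i where A: "A \<subseteq> U" "card A = m" and i: "i \<in> I" "card (A \<inter> W i) \<le> L"
      by blast
    obtain Q where "Q \<subseteq> W i - A" "card Q = s - L"
      using exists_subset_Diff_card[OF fin_W[OF i(1)] i(2)] assms(3)[OF i(1)] by auto
    with A i(1) show "A \<in> (\<Union>i\<in>I. \<Union>Q\<in>F i. {A. A \<subseteq> U - Q \<and> card A = m})"
      unfolding F_def by blast
  qed
  then have "card {A. A \<subseteq> U \<and> card A = m \<and> (\<exists>i\<in>I. card (A \<inter> W i) \<le> L)}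
      \<le> card (\<Union>i\<in>I. \<Union>Q\<in>F i. {A. A \<subseteq> U - Q \<and> card A = m})"
    by (rule card_mono[rotated]) (auto intro: finite_subset[of _ "Pow U"] simp: assms(1))
  also have "\<dots> \<le> (\<Sum>i\<in>I. \<Sum>Q\<in>F i. card {A. A \<subseteq> U - Q \<and> card A = m})"
    using assms(2) fin_W
    by (intro order_trans[OF card_UN_le] sum_mono card_UN_le) (auto simp: F_def)
  also have "\<dots> = (\<Sum>i\<in>I. \<Sum>Q\<in>F i. (card U - (s - L)) choose m)"
  proof (intro sum.cong refl)
    fix i Q assume "i \<in> I" "Q \<in> F i"
    then have "Q \<subseteq> U" "card Q = s - L" using assms(3)[of i] by (auto simp: F_def)
    then have "card (U - Q) = card U - (s - L)"
      using assms(1) by (metis card_Diff_subset finite_subset)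
    then show "card {A. A \<subseteq> U - Q \<and> card A = m} = (card U - (s - L)) choose m"
      using assms(1) by (simp add: n_subsets)
  qed
  also have "\<dots> = card I * ((s choose L) * ((card U - (s - L)) choose m))"
  proof -
    have "card (F i) = s choose L" if "i \<in> I" for i
      using n_subsets[OF fin_W[OF that]] assms(3)[OF that] assms(4)
      by (simp add: F_def binomial_symmetric[symmetric])
    then show ?thesis by simp
  qed
  finally show ?thesis by (simp only: mult.assoc)
qed

lemma binomial_diff_mult_power2_le:
  assumes "t \<le> N" "N \<le> 2 * m"
  shows "((N - t) choose m) * 2 ^ t \<le> N choose m"
  using assms
proof (induction t)
  case 0
  then show ?case by simp
next
  case (Suc t)
  define a where "a = N - t"
  have "0 < a" "a \<le> 2 * m" "N - Suc t = a - 1"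
    using Suc.prems by (auto simp: a_def)
  have "a * (2 * ((a - 1) choose m)) = 2 * ((a - m) * (a choose m))"
    by (simp add: binomial_absorb_comp)
  also have "\<dots> \<le> a * (a choose m)"
    using \<open>a \<le> 2 * m\<close> by (simp only: mult.assoc[symmetric]) (intro mult_right_mono; arith)
  finally have "2 * ((a - 1) choose m) \<le> a choose m"
    using \<open>0 < a\<close> by simp
  then have "((N - Suc t) choose m) * 2 ^ Suc t \<le> (a choose m) * 2 ^ t"
    unfolding \<open>N - Suc t = a - 1\<close> by simp
  also have "\<dots> \<le> N choose m"
    using Suc by (simp add: a_def)
  finally show ?case .
qed

lemma card_subsets_not_dense_windows:
  assumes "finite U" "card U \<le> 2 * m" "0 < s" "L \<le> s"
  shows "real (card {A. A \<subseteq> U \<and> card A = m \<and> \<not> dense_windows U A s L})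
           \<le> real (card U) * real (s choose L) / 2 ^ (s - L) * real (card U choose m)"
proof (cases "s \<le> card U")
  case False
  then have "{A. A \<subseteq> U \<and> card A = m \<and> \<not> dense_windows U A s L} = {}"
    by (auto simp: dense_windows_def)
  then show ?thesis by (simp only:) simp
next
  case True
  define N where "N = card U"
  have "{A. A \<subseteq> U \<and> card A = m \<and> \<not> dense_windows U A s L}
      = {A. A \<subseteq> U \<and> card A = m \<and> (\<exists>i\<in>{..N - s}. card (A \<inter> window U s i) \<le> L)}"
    using True by (auto simp: dense_windows_def N_def not_less le_diff_conv2)
  then have "card {A. A \<subseteq> U \<and> card A = m \<and> \<not> dense_windows U A s L}
      \<le> card {..N - s} * (s choose L) * ((N - (s - L)) choose m)"
    unfolding N_def using assms(1,4) window_subset_card[OF assms(1)]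
    by (simp only:) (intro card_subsets_sparse_in_some; auto simp: le_diff_conv2 True)
  also have "\<dots> \<le> N * (s choose L) * ((N - (s - L)) choose m)"
    using assms(3) True by (intro mult_right_mono) (auto simp: N_def)
  finally have "card {A. A \<subseteq> U \<and> card A = m \<and> \<not> dense_windows U A s L} * 2 ^ (s - L)
      \<le> N * (s choose L) * (((N - (s - L)) choose m) * 2 ^ (s - L))"
    by (simp add: mult.assoc)
  also have "\<dots> \<le> N * (s choose L) * (N choose m)"
    using assms(2) True unfolding N_def
    by (intro mult_left_mono binomial_diff_mult_power2_le) auto
  finally have "real (card {A. A \<subseteq> U \<and> card A = m \<and> \<not> dense_windows U A s L} * 2 ^ (s - L))
      \<le> real (N * (s choose L) * (N choose m))"
    by (simp only: of_nat_le_iff)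
  then show ?thesis
    unfolding N_def by (simp add: field_simps)
qed

section \<open>The sampling distribution\<close>

definition AB_pairs :: "'a set \<Rightarrow> nat \<Rightarrow> nat \<Rightarrow> ('a set \<times> 'a set) set" where
  "AB_pairs S m k = {(A, B). A \<subseteq> S \<and> card A = m \<and> B \<subseteq> S - A \<and> card B = k}"

lemma finite_AB_pairs: "finite S \<Longrightarrow> finite (AB_pairs S m k)"
  unfolding AB_pairs_def by (rule finite_subset[of _ "Pow S \<times> Pow S"]) auto

lemma sample_AB_eq_pmf_of_set:
  assumes "finite S" "m + k \<le> card S"
  shows "sample_AB S m k = pmf_of_set (AB_pairs S m k)"
proof -
  define AA where "AA = {A. A \<subseteq> S \<and> card A = m}"
  define BB where "BB A = {B. B \<subseteq> S - A \<and> card B = k}" for A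
  have "AA \<noteq> {}" "finite AA"
    using assms obtain_subset_with_card_n[of m S] by (auto simp: AA_def)
  have card_BB: "card (BB A) = (card S - m) choose k" if "A \<in> AA" for A
    using that assms(1) by (auto simp: AA_def BB_def n_subsets card_Diff_subset finite_subset)
  have BB: "BB A \<noteq> {}" "finite (BB A)" if "A \<in> AA" for A
  proof -
    have "0 < card (BB A)"
      using card_BB[OF that] assms(2) by simp
    then show "BB A \<noteq> {}" "finite (BB A)" by (auto simp: card_gt_0_iff)
  qed
  have "sample_AB S m k = pmf_of_set AA \<bind> (\<lambda>A. pmf_of_set (Pair A ` BB A))"
    unfolding sample_AB_def AA_def[symmetric] BB_def[symmetric]
  proof (intro bind_pmf_cong refl)
    fix A assume "A \<in> set_pmf (pmf_of_set AA)"
    then have "A \<in> AA" using \<open>AA \<noteq> {}\<close> \<open>finite AA\<close> by simp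
    then show "pmf_of_set (BB A) \<bind> (\<lambda>B. return_pmf (A, B)) = pmf_of_set (Pair A ` BB A)"
      using BB by (simp add: map_pmf_def[symmetric] map_pmf_of_set_inj inj_on_def)
  qed
  also have "\<dots> = pmf_of_set (\<Union>A\<in>AA. Pair A ` BB A)"
    using \<open>AA \<noteq> {}\<close> \<open>finite AA\<close> BB card_BB
    by (intro pmf_of_set_UN[where n = "(card S - m) choose k", symmetric])
      (auto simp: card_image inj_on_def disjoint_family_on_def)
  also have "(\<Union>A\<in>AA. Pair A ` BB A) = AB_pairs S m k"
    by (auto simp: AA_def BB_def AB_pairs_def)
  finally show ?thesis .
qed

lemma AB_pairs_nonempty:
  assumes "finite S" "m + k \<le> card S"
  shows "AB_pairs S m k \<noteq> {}"
proof -
  obtain A where A: "A \<subseteq> S" "card A = m"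
    using assms(2) obtain_subset_with_card_n[of m S] by auto
  then have "k \<le> card (S - A)"
    using assms by (simp add: card_Diff_subset finite_subset)
  then obtain B where "B \<subseteq> S - A" "card B = k"
    by (meson obtain_subset_with_card_n)
  with A show ?thesis by (auto simp: AB_pairs_def)
qed

lemma set_pmf_sample_AB:
  "finite S \<Longrightarrow> m + k \<le> card S \<Longrightarrow> set_pmf (sample_AB S m k) = AB_pairs S m k"
  by (simp add: sample_AB_eq_pmf_of_set AB_pairs_nonempty finite_AB_pairs)

lemma card_AB_pairs_by_union:
  assumes "finite S"
  shows "card {p\<in>AB_pairs S m k. Q (fst p \<union> snd p) (fst p)}
           = (\<Sum>U | U \<subseteq> S \<and> card U = m + k. card {A. A \<subseteq> U \<and> card A = m \<and> Q U A})"
proof -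
  let ?UU = "{U. U \<subseteq> S \<and> card U = m + k}"
  let ?F = "\<lambda>U. {A. A \<subseteq> U \<and> card A = m \<and> Q U A}"
  have "bij_betw (\<lambda>(U, A). (A, U - A)) (SIGMA U:?UU. ?F U)
          {p\<in>AB_pairs S m k. Q (fst p \<union> snd p) (fst p)}"
  proof (rule bij_betw_byWitness[where f' = "\<lambda>(A, B). (A \<union> B, A)"])
    show "(\<lambda>(U, A). (A, U - A)) ` (SIGMA U:?UU. ?F U)
        \<subseteq> {p\<in>AB_pairs S m k. Q (fst p \<union> snd p) (fst p)}"
    proof (rule image_subsetI)
      fix x assume "x \<in> (SIGMA U:?UU. ?F U)"
      then obtain U A where x: "x = (U, A)" "U \<subseteq> S" "card U = m + k" "A \<subseteq> U" "card A = m" "Q U A"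
        by auto
      moreover have "finite U" using x(2) assms finite_subset by blast
      ultimately show "(\<lambda>(U, A). (A, U - A)) x \<in> {p\<in>AB_pairs S m k. Q (fst p \<union> snd p) (fst p)}"
        by (auto simp: AB_pairs_def card_Diff_subset finite_subset Un_absorb1)
    qed
    show "(\<lambda>(A, B). (A \<union> B, A)) ` {p\<in>AB_pairs S m k. Q (fst p \<union> snd p) (fst p)}
        \<subseteq> (SIGMA U:?UU. ?F U)"
    proof (rule image_subsetI)
      fix p assume "p \<in> {p\<in>AB_pairs S m k. Q (fst p \<union> snd p) (fst p)}"
      then obtain A B where p: "p = (A, B)" "(A, B) \<in> AB_pairs S m k" "Q (A \<union> B) A"
        by (cases p) auto
      moreover have "finite A" "finite B" "A \<inter> B = {}"
        using p(2) assms by (auto simp: AB_pairs_def finite_subset)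
      ultimately show "(\<lambda>(A, B). (A \<union> B, A)) p \<in> (SIGMA U:?UU. ?F U)"
        by (auto simp: AB_pairs_def card_Un_disjoint)
    qed
  qed (auto simp: AB_pairs_def)
  then have "card {p\<in>AB_pairs S m k. Q (fst p \<union> snd p) (fst p)} = card (SIGMA U:?UU. ?F U)"
    by (simp add: bij_betw_same_card)
  also have "\<dots> = (\<Sum>U\<in>?UU. card (?F U))"
    using assms by (intro card_SigmaI) (auto intro: finite_subset[of _ "Pow S"])
  finally show ?thesis .
qed

lemma prob_sample_AB_le:
  assumes "finite S" "m + k \<le> card S"
    and "\<And>U. U \<subseteq> S \<Longrightarrow> card U = m + k \<Longrightarrow>
           real (card {A. A \<subseteq> U \<and> card A = m \<and> Q U A}) \<le> \<epsilon> * real ((m + k) choose m)"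
  shows "measure_pmf.prob (sample_AB S m k) {(A, B). Q (A \<union> B) A} \<le> \<epsilon>"
proof -
  let ?P = "AB_pairs S m k"
  let ?UU = "{U. U \<subseteq> S \<and> card U = m + k}"
  have "card ?P = (\<Sum>U\<in>?UU. card {A. A \<subseteq> U \<and> card A = m})"
    using card_AB_pairs_by_union[OF assms(1), of m k "\<lambda>_ _. True"] by simp
  also have "\<dots> = (\<Sum>U\<in>?UU. (m + k) choose m)"
  proof (intro sum.cong refl)
    fix U assume "U \<in> ?UU"
    then show "card {A. A \<subseteq> U \<and> card A = m} = (m + k) choose m"
      using n_subsets[of U m] assms(1) finite_subset by auto
  qed
  finally have card_P: "card ?P = (\<Sum>U\<in>?UU. (m + k) choose m)" .
  have "real (card {p\<in>?P. Q (fst p \<union> snd p) (fst p)})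
      = (\<Sum>U\<in>?UU. real (card {A. A \<subseteq> U \<and> card A = m \<and> Q U A}))"
    by (simp add: card_AB_pairs_by_union[OF assms(1)])
  also have "\<dots> \<le> (\<Sum>U\<in>?UU. \<epsilon> * real ((m + k) choose m))"
    using assms(3) by (intro sum_mono) auto
  also have "\<dots> = \<epsilon> * real (card ?P)"
    using card_P by simp
  finally have "real (card {p\<in>?P. Q (fst p \<union> snd p) (fst p)}) \<le> \<epsilon> * real (card ?P)" .
  moreover have "0 < card ?P"
    using AB_pairs_nonempty[OF assms(1,2)] finite_AB_pairs[OF assms(1)] by (simp add: card_gt_0_iff)
  moreover have "?P \<inter> {(A, B). Q (A \<union> B) A} = {p\<in>?P. Q (fst p \<union> snd p) (fst p)}"
    by auto
  ultimately show ?thesis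
    using AB_pairs_nonempty[OF assms(1,2)] finite_AB_pairs[OF assms(1)]
    by (simp add: sample_AB_eq_pmf_of_set[OF assms(1,2)] measure_pmf_of_set divide_le_eq)
qed

section \<open>Binomial estimates\<close>

lemma power_div_fact_le_exp:
  fixes x :: real
  assumes "0 \<le> x"
  shows "x ^ n / fact n \<le> exp x"
proof -
  have "(\<lambda>n. x ^ n /\<^sub>R fact n) sums exp x" by (rule exp_converges)
  moreover have "(\<Sum>i\<in>{n}. x ^ i /\<^sub>R fact i) \<le> (\<Sum>i. x ^ i /\<^sub>R fact i)"
    using calculation assms by (intro sum_le_suminf) (auto simp: sums_iff)
  ultimately show ?thesis by (simp add: sums_iff divide_inverse mult.commute)
qed

lemma binomial_le_exp_mult_div_power:
  assumes "0 < k"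
  shows "real (n choose k) \<le> (exp 1 * real n / real k) ^ k"
proof -
  have "real ((n choose k) * fact k) \<le> real (n ^ k)"
    by (simp only: of_nat_le_iff binomial_fact_pow)
  then have nk: "real (n choose k) * fact k \<le> real n ^ k" by simp
  have "real k ^ k \<le> exp (real k) * fact k"
    using power_div_fact_le_exp[of "real k" k] by (simp add: divide_le_eq)
  then have "real (n choose k) * real k ^ k \<le> real (n choose k) * (exp (real k) * fact k)"
    by (rule mult_left_mono) simp
  also have "\<dots> = real (n choose k) * fact k * exp (real k)"
    by (simp add: mult_ac)
  also have "\<dots> \<le> real n ^ k * exp (real k)"
    using nk by (intro mult_right_mono) auto
  also have "\<dots> = (exp 1 * real n) ^ k"
    by (simp add: power_mult_distrib exp_of_nat_mult[symmetric] mult.commute)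
  finally show ?thesis
    using assms by (simp add: power_divide le_divide_eq)
qed

lemma binomial_le_power2_if_le_56:
  assumes "0 < k" "real n \<le> 56 * real k"
  shows "real (n choose k) \<le> 2 ^ (8 * k)"
proof -
  have "real (n choose k) \<le> (exp 1 * real n / real k) ^ k"
    using assms(1) by (rule binomial_le_exp_mult_div_power)
  also have "\<dots> \<le> (2 ^ 8) ^ k"
  proof (rule power_mono)
    have "exp 1 * real n \<le> 3 * (56 * real k)"
      using exp_le assms(2) by (intro mult_mono) auto
    then show "exp 1 * real n / real k \<le> 2 ^ 8"
      using assms(1) by (simp add: divide_le_eq)
  qed simp
  finally show ?thesis by (simp add: power_mult)
qed

lemma mult_binomial_div_power2_le:
  assumes "0 < n" "real n \<le> 2 ^ d" "0 < L" "real s \<le> 56 * real L" "5 * d + 9 * L \<le> s"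
  shows "real n * real (s choose L) / 2 ^ (s - L) \<le> 1 / real n ^ 4"
proof -
  have "real n ^ 5 * real (s choose L) \<le> (2 ^ d) ^ 5 * 2 ^ (8 * L)"
    using assms(2) binomial_le_power2_if_le_56[OF assms(3,4)] by (intro mult_mono power_mono) auto
  also have "\<dots> = 2 ^ (5 * d + 8 * L)"
    by (simp add: power_add power_mult mult.commute)
  also have "\<dots> \<le> 2 ^ (s - L)"
    using assms(5) by (intro power_increasing) auto
  finally have "real n * real (s choose L) * real n ^ 4 \<le> 2 ^ (s - L)"
    by (simp add: power_numeral_reduce mult_ac)
  then show ?thesis
    using assms(1) by (simp add: divide_le_eq le_divide_eq)
qed

lemma window_parameter_bounds:
  fixes \<alpha> :: real and d n :: nat
  assumes "2 \<le> \<alpha>" "2 \<le> n" "log 2 (real n) \<le> real d"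
  defines "s \<equiv> nat \<lfloor>112 * \<alpha> * real d\<rfloor>" and "L \<equiv> nat \<lceil>2 * \<alpha> * real d\<rceil>"
  shows "0 < s" "L \<le> s" "real n * real (s choose L) / 2 ^ (s - L) \<le> 1 / real n ^ 4"
proof -
  have "log 2 2 \<le> log 2 (real n)"
    using assms(2) by simp
  with assms(3) have "1 \<le> real d" by simp
  define a where "a = \<alpha> * real d"
  have "2 * real d \<le> a"
    unfolding a_def using assms(1) by (intro mult_right_mono) auto
  with \<open>1 \<le> real d\<close> have "2 \<le> a" by linarith
  have "L = nat \<lceil>2 * a\<rceil>" "s = nat \<lfloor>112 * a\<rfloor>"
    by (simp_all add: L_def s_def a_def mult.assoc)
  with \<open>2 \<le> a\<close> have "real L = of_int \<lceil>2 * a\<rceil>" "real s = of_int \<lfloor>112 * a\<rfloor>"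
    by simp_all
  then have L: "2 * a \<le> real L" "real L \<le> 2 * a + 1"
    and s: "112 * a - 1 \<le> real s" "real s \<le> 112 * a"
    using ceiling_correct[of "2 * a"] floor_correct[of "112 * a"] by linarith+
  show "0 < s" "L \<le> s"
    using L s \<open>2 \<le> a\<close> by linarith+
  have "real n = 2 powr (log 2 (real n))"
    using assms(2) by simp
  also have "\<dots> \<le> 2 ^ d"
    using assms(3) by (simp add: powr_realpow[symmetric])
  finally have "real n \<le> 2 ^ d" .
  moreover have "0 < L" "real s \<le> 56 * real L" "5 * d + 9 * L \<le> s"
    using L s \<open>2 * real d \<le> a\<close> \<open>2 \<le> a\<close> by linarith+
  ultimately show "real n * real (s choose L) / 2 ^ (s - L) \<le> 1 / real n ^ 4"
    using assms(2) by (intro mult_binomial_div_power2_le) auto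
qed

section \<open>Probability of a large dislocation\<close>

lemma prob_not_dense_windows_le:
  assumes "finite S" "card S = n" "k \<le> m" "m + k \<le> n" "0 < s" "L \<le> s"
  shows "measure_pmf.prob (sample_AB S m k) {(A, B). \<not> dense_windows (A \<union> B) A s L}
           \<le> real n * real (s choose L) / 2 ^ (s - L)"
proof (rule prob_sample_AB_le[where Q = "\<lambda>U A. \<not> dense_windows U A s L"])
  show "finite S" "m + k \<le> card S" using assms by auto
next
  fix U assume "U \<subseteq> S" "card U = m + k"
  then have "real (card {A. A \<subseteq> U \<and> card A = m \<and> \<not> dense_windows U A s L})
      \<le> real (m + k) * real (s choose L) / 2 ^ (s - L) * real ((m + k) choose m)"
    using card_subsets_not_dense_windows[of U m s L] assms finite_subset by auto
  also have "\<dots> \<le> real n * real (s choose L) / 2 ^ (s - L) * real ((m + k) choose m)"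
    using assms by (intro mult_right_mono divide_right_mono) auto
  finally show "real (card {A. A \<subseteq> U \<and> card A = m \<and> \<not> dense_windows U A s L})
      \<le> real n * real (s choose L) / 2 ^ (s - L) * real ((m + k) choose m)" .
qed

lemma large_disl_imp_not_dense_windows:
  fixes \<alpha> :: real and d :: nat and As :: "'a::linorder list"
  assumes "2 \<le> \<alpha>" "1 \<le> d" "A \<inter> B = {}" "set As = A" "real (disl As) \<le> real d"
    and "\<And>x. x \<in> B \<Longrightarrow> 1 \<le> r x \<and> \<bar>real (r x) - real (rank x A)\<bar> \<le> \<alpha> * real d"
    and "insertion_result As B r T" "226 * \<alpha> * real d < real (disl T)"
  shows "\<not> dense_windows (A \<union> B) A (nat \<lfloor>112 * \<alpha> * real d\<rfloor>) (nat \<lceil>2 * \<alpha> * real d\<rceil>)"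
proof
  define s where "s = nat \<lfloor>112 * \<alpha> * real d\<rfloor>"
  define L where "L = nat \<lceil>2 * \<alpha> * real d\<rceil>"
  assume "dense_windows (A \<union> B) A (nat \<lfloor>112 * \<alpha> * real d\<rfloor>) (nat \<lceil>2 * \<alpha> * real d\<rceil>)"
  then have dense: "dense_windows (A \<union> B) A s L" by (simp add: s_def L_def)
  have "2 \<le> \<alpha> * real d"
    using assms(1,2) mult_mono[of 2 \<alpha> 1 "real d"] by simp
  then have s: "0 < s" "real s \<le> 112 * \<alpha> * real d"
    unfolding s_def by linarith+
  have L: "2 * (\<alpha> * real d) \<le> real L"
    unfolding L_def by linarith
  have "real (disl As) \<le> \<alpha> * real d"
    using assms(1,5) mult_right_mono[of 1 \<alpha> "real d"] by simp
  with assms(3,4,6,7) have approx: "approximate_insertion As B r T (\<alpha> * real d)"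
    by unfold_locales auto
  then have "sparse_wrt A L B s"
    using assms(4) dense s(1) approximate_insertion.finite_B
    by (intro dense_windows_imp_sparse_wrt[of "A \<union> B"]) auto
  with approx L s(1) have "real (disl T) \<le> \<alpha> * real d + 2 * real s"
    using assms(4) by (intro approximate_insertion.disl_le_if_sparse_wrt) auto
  with s(2) assms(8) \<open>2 \<le> \<alpha> * real d\<close> show False by linarith
qed

lemma prob_some_not_dense_windows_le:
  fixes \<alpha> :: real and S :: "'a::linorder set"
  assumes "2 \<le> \<alpha>" "finite S" "card S = n" "2 \<le> n" "k \<le> m" "m + k \<le> n"
  shows "measure_pmf.prob (sample_AB S m k)
           (\<Union>d\<in>{d::nat. log 2 (real n) \<le> real d \<and> d \<le> n}.
              {(A, B). \<not> dense_windows (A \<union> B) A (nat \<lfloor>112 * \<alpha> * real d\<rfloor>) (nat \<lceil>2 * \<alpha> * real d\<rceil>)})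
         \<le> 1 / real n ^ 3" (is "measure_pmf.prob ?p (\<Union>d\<in>?D. ?Bad d) \<le> _")
proof -
  have "log 2 2 \<le> log 2 (real n)"
    using assms(4) by simp
  then have "?D \<subseteq> {1..n}" by auto
  then have "finite ?D" "card ?D \<le> n"
    using card_mono[of "{1..n}" ?D] finite_subset by auto
  have "measure_pmf.prob ?p (\<Union>d\<in>?D. ?Bad d) \<le> (\<Sum>d\<in>?D. measure_pmf.prob ?p (?Bad d))"
    using \<open>finite ?D\<close> by (intro measure_pmf.finite_measure_subadditive_finite) auto
  also have "\<dots> \<le> (\<Sum>d\<in>?D. 1 / real n ^ 4)"
  proof (rule sum_mono)
    fix d assume "d \<in> ?D"
    then have "log 2 (real n) \<le> real d" by simp
    note params = window_parameter_bounds[OF assms(1,4) this]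
    show "measure_pmf.prob ?p (?Bad d) \<le> 1 / real n ^ 4"
      using prob_not_dense_windows_le[OF assms(2,3,5,6) params(1,2)] params(3) by linarith
  qed
  also have "\<dots> \<le> real n * (1 / real n ^ 4)"
    using \<open>card ?D \<le> n\<close> by (simp add: divide_right_mono)
  also have "\<dots> = 1 / real n ^ 3"
    using assms(4) by (simp add: eval_nat_numeral)
  finally show ?thesis .
qed

lemma prob_large_disl_le:
  fixes \<alpha> \<delta> :: real and S :: "'a::linorder set"
  assumes "2 \<le> \<alpha>" "finite S" "card S = n" "2 \<le> n" "k \<le> m" "m + k \<le> n" "\<delta> \<le> real n"
  shows "measure_pmf.prob (sample_AB S m k)
             {(A, B). \<exists>As (d::nat) r T.
                 distinct As \<and> set As = A \<and>
                 real (disl As) \<le> real d \<and> log 2 (real n) \<le> real d \<and>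
                 real d \<le> \<delta> \<and>
                 (\<forall>x\<in>B. 1 \<le> r x \<and> r x \<le> m \<and>
                        \<bar>real (r x) - real (rank x A)\<bar> \<le> \<alpha> * real d) \<and>
                 insertion_result As B r T \<and>
                 real (disl T) > 226 * \<alpha> * real d}
           \<le> 1 / real n ^ 3" (is "measure_pmf.prob ?p ?E \<le> _")
proof -
  let ?Bad = "\<lambda>d::nat. {(A, B). \<not> dense_windows (A \<union> B) A
      (nat \<lfloor>112 * \<alpha> * real d\<rfloor>) (nat \<lceil>2 * \<alpha> * real d\<rceil>)}"
  let ?D = "{d::nat. log 2 (real n) \<le> real d \<and> d \<le> n}"
  have "log 2 2 \<le> log 2 (real n)"
    using assms(4) by simp
  have "?E \<inter> set_pmf ?p \<subseteq> (\<Union>d\<in>?D. ?Bad d)"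
  proof
    fix p assume "p \<in> ?E \<inter> set_pmf ?p"
    then obtain A B As d r T where p: "p = (A, B)" "(A, B) \<in> AB_pairs S m k"
      and w: "set As = A" "real (disl As) \<le> real d" "log 2 (real n) \<le> real d" "real d \<le> \<delta>"
        "\<forall>x\<in>B. 1 \<le> r x \<and> r x \<le> m \<and> \<bar>real (r x) - real (rank x A)\<bar> \<le> \<alpha> * real d"
        "insertion_result As B r T" "226 * \<alpha> * real d < real (disl T)"
      using set_pmf_sample_AB[OF assms(2)] assms(3,6) by auto
    then have "A \<inter> B = {}" by (auto simp: AB_pairs_def)
    have "d \<in> ?D" "1 \<le> d"
      using w(3,4) assms(7) \<open>log 2 2 \<le> _\<close> by auto
    with large_disl_imp_not_dense_windows[OF assms(1) \<open>1 \<le> d\<close> \<open>A \<inter> B = {}\<close> w(1,2) _ w(6,7)] w(5)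
    show "p \<in> (\<Union>d\<in>?D. ?Bad d)"
      unfolding p by auto
  qed
  then have "measure_pmf.prob ?p ?E \<le> measure_pmf.prob ?p (\<Union>d\<in>?D. ?Bad d)"
    by (subst measure_Int_set_pmf[symmetric]) (rule measure_pmf.finite_measure_mono; simp)
  also have "\<dots> \<le> 1 / real n ^ 3"
    using prob_some_not_dense_windows_le[OF assms(1-6)] .
  finally show ?thesis .
qed

theorem lemma3p3:
  fixes \<alpha> :: real
  assumes "\<alpha> \<ge> 2"
  shows "\<exists>C>0. \<forall>(S :: 'a::linorder set) n m k.
           finite S \<longrightarrow> card S = n \<longrightarrow>
           real m \<ge> 64 \<longrightarrow> real m \<ge> sqrt (real n) \<longrightarrow>
           k \<le> m \<longrightarrow> m + k \<le> n \<longrightarrow>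
           measure_pmf.prob (sample_AB S m k)
             {(A, B). \<exists>As (d::nat) r T.
                 distinct As \<and> set As = A \<and>
                 real (disl As) \<le> real d \<and> log 2 (real n) \<le> real d \<and>
                 real d \<le> sqrt (real n) / (2160 * \<alpha>) \<and>
                 (\<forall>x\<in>B. 1 \<le> r x \<and> r x \<le> m \<and>
                        \<bar>real (r x) - real (rank x A)\<bar> \<le> \<alpha> * real d) \<and>
                 insertion_result As B r T \<and>
                 real (disl T) > 226 * \<alpha> * real d}
           \<le> C / real n ^ 3"
proof -
  have n_ge_2: "2 \<le> n" if "64 \<le> real m" "m + k \<le> n" for n m k :: nat
    using that by linarith
  have delta_le: "sqrt (real n) / (2160 * \<alpha>) \<le> real n" for n :: nat
  proof -
    have "sqrt (real n) \<le> sqrt (real n * real n)"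
      by (rule real_sqrt_le_mono) (metis le_square of_nat_le_iff of_nat_mult)
    also have "\<dots> \<le> real n * (2160 * \<alpha>)"
      using assms by (simp add: mult_le_cancel_left1)
    finally show ?thesis
      using assms by (simp add: divide_le_eq)
  qed
  show ?thesis
    by (intro exI[of _ "1::real"] conjI allI impI prob_large_disl_le[OF assms])
      (auto intro: n_ge_2 delta_le)
qed

end
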